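(* Let $r>0$ be real, let $k_r\in(0,1)$ be the singular modulus, $k'^2_r=1-k_r^2$, and let $a(r)$ be the elliptic alpha function. For $n\ge 0$ let $$B^{(2)}_n=\sum_{j=0}^{n}\left[\binom{n}{j}\left(\tfrac12\right)_j\left(\tfrac12\right)_{n-j}\right]^2 .$$ Then $$\sum_{n=0}^{\infty}\frac{B^{(2)}_n}{(n!)^2}\,k_r^{2n}\left(\sqrt r\,k'^2_r\,n+a(r)-\sqrt r\,k_r^2\right)=\frac1\pi .$$
   Context: $K(x)=\int_0^{\pi/2}\frac{dt}{\sqrt{1-x^2\sin^2 t}}$ and $E(x)=\int_0^{\pi/2}\sqrt{1-x^2\sin^2 t}\,dt$. For $r>0$ the singular modulus $k_r\in(0,1)$ is the unique solution $w$ of $K(\sqrt{1-w^2})/K(w)=\sqrt r$. The elliptic alpha function is $a(r)=\frac{\pi}{4K(k_r)^2}-\sqrt r\left(\frac{E(k_r)}{K(k_r)}-1\right)$. $(a)_n=a(a+1)\cdots(a+n-1)$, $(a)_0=1$. *)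

theory Defs
  imports "HOL-Analysis.Analysis"
begin

definition ellK :: "real \<Rightarrow> real" where
  "ellK x = integral {0..pi/2} (\<lambda>t. 1 / sqrt (1 - x^2 * (sin t)^2))"

definition ellE :: "real \<Rightarrow> real" where
  "ellE x = integral {0..pi/2} (\<lambda>t. sqrt (1 - x^2 * (sin t)^2))"

definition singular_modulus :: "real \<Rightarrow> real" where
  "singular_modulus r =
     (THE w. 0 < w \<and> w < 1 \<and> ellK (sqrt (1 - w^2)) / ellK w = sqrt r)"

definition elliptic_alpha :: "real \<Rightarrow> real" where
  "elliptic_alpha r =
     (let k = singular_modulus r in
        pi / (4 * (ellK k)^2) - sqrt r * (ellE k / ellK k - 1))"

definition B2 :: "nat \<Rightarrow> real" where
  "B2 n = (\<Sum>j=0..n. (real (n choose j) * pochhammer (1/2) j * pochhammer (1/2) (n - j))^2)"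

end

theory Submission
  imports Defs
begin

text \<open>Write \<open>x = k\<^sup>2\<close>, \<open>A(x) = \<Sum> ((1/2)\<^sub>n / n!)\<^sup>2 x\<^sup>n\<close> (\<open>K_series\<close>) and \<open>\<theta> = x d/dx\<close>
  (\<open>K_series_theta\<close> is \<open>\<theta>A\<close>). Integrating the binomial series of \<open>(1 - x sin\<^sup>2 t)\<^sup>-\<^sup>1\<^sup>/\<^sup>2\<close> and
  \<open>(1 - x sin\<^sup>2 t)\<^sup>1\<^sup>/\<^sup>2\<close> termwise against Wallis' integrals gives \<open>K = \<pi>/2 A\<close>, and a telescoping
  identity between their coefficients gives \<open>E = \<pi>/2 (1 - x) (A + 2 \<theta>A)\<close>. Since the \<open>B\<^sub>n / (n!)\<^sup>2\<close>
  are the coefficients of \<open>A\<^sup>2\<close>, the series equals \<open>2 \<surd>r k'\<^sup>2 A \<theta>A + (a(r) - \<surd>r k\<^sup>2) A\<^sup>2\<close>, and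
  inserting the definition of \<open>a(r)\<close> leaves \<open>1/\<pi>\<close>. This holds for every modulus in \<open>(0,1)\<close>; of the
  singular modulus only its existence is needed, which follows because \<open>A(1 - x)/A(x)\<close> decreases
  continuously from \<open>\<infinity>\<close> to \<open>0\<close> on \<open>(0,1)\<close>.\<close>

definition kcoeff :: "nat \<Rightarrow> real" where
  "kcoeff n = pochhammer (1/2) n / fact n"

definition ecoeff :: "nat \<Rightarrow> real" where
  "ecoeff n = pochhammer (-1/2) n / fact n"

lemma kcoeff_0 [simp]: "kcoeff 0 = 1"
  by (simp add: kcoeff_def)

lemma ecoeff_0 [simp]: "ecoeff 0 = 1"
  by (simp add: ecoeff_def)

lemma kcoeff_Suc: "kcoeff (Suc n) = kcoeff n * (2 * real n + 1) / (2 * real n + 2)"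
  by (simp add: kcoeff_def pochhammer_Suc field_simps)

lemma ecoeff_Suc_eq_kcoeff: "ecoeff (Suc n) = - kcoeff (Suc n) / (2 * real n + 1)"
proof -
  define p where "p = pochhammer (1/2 :: real) n"
  have "ecoeff (Suc n) = - (p / 2) / fact (Suc n)"
    by (simp add: ecoeff_def p_def pochhammer_rec)
  moreover have "kcoeff (Suc n) = (p / 2) * (2 * real n + 1) / fact (Suc n)"
    by (simp add: kcoeff_def p_def pochhammer_Suc field_simps)
  ultimately show ?thesis
    by (simp del: fact_Suc)
qed

lemma kcoeff_pos: "0 < kcoeff n"
  by (induction n) (auto simp: kcoeff_Suc)

lemma kcoeff_le_1: "kcoeff n \<le> 1"
proof (induction n)
  case (Suc n)
  have "kcoeff (Suc n) \<le> kcoeff n"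
    using kcoeff_pos[of n] by (simp add: kcoeff_Suc field_simps)
  with Suc show ?case by simp
qed simp

lemma abs_ecoeff_le_1: "\<bar>ecoeff n\<bar> \<le> 1"
proof (cases n)
  case (Suc m)
  have "\<bar>ecoeff n\<bar> = kcoeff n / (2 * real m + 1)"
    using kcoeff_pos[of n] by (simp add: Suc ecoeff_Suc_eq_kcoeff abs_div)
  also have "\<dots> \<le> kcoeff n"
    using kcoeff_pos[of n] by (simp add: field_simps)
  finally show ?thesis using kcoeff_le_1[of n] by simp
qed simp

lemma ecoeff_kcoeff_Suc:
  "ecoeff (Suc n) * kcoeff (Suc n) =
     (2 * real n + 3) * kcoeff (Suc n) ^ 2 - (2 * real n + 1) * kcoeff n ^ 2"
proof -
  define c where "c = kcoeff (Suc n)"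
  define m where "m = 2 * real n + 1"
  have "m > 0" by (simp add: m_def)
  have "kcoeff n = c * (m + 1) / m"
    using kcoeff_Suc[of n] unfolding c_def[symmetric] m_def by (simp add: field_simps)
  then have "(2 * real n + 3) * c ^ 2 - (2 * real n + 1) * kcoeff n ^ 2
      = (m + 2) * c ^ 2 - m * (c * (m + 1) / m) ^ 2"
    by (simp add: m_def)
  also have "\<dots> = - c / m * c"
    using \<open>m > 0\<close> by (simp add: field_simps power2_eq_square)
  finally show ?thesis
    by (simp add: ecoeff_Suc_eq_kcoeff c_def m_def)
qed

lemma pochhammer_binomial_sums:
  fixes a u :: real
  assumes "\<bar>u\<bar> < 1"
  shows "(\<lambda>n. pochhammer a n / fact n * u ^ n) sums (1 - u) powr (- a)"
proof -
  have "((- a) gchoose n) * (- u) ^ n = pochhammer a n / fact n * u ^ n" for n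
  proof -
    have "((- a) gchoose n) * (- u) ^ n = ((-1) ^ n * (-1) ^ n) * (pochhammer a n / fact n * u ^ n)"
      by (simp add: gbinomial_pochhammer power_minus[of u])
    also have "(-1) ^ n * (-1) ^ n = (1 :: real)"
      by (simp flip: power_mult_distrib)
    finally show ?thesis by simp
  qed
  moreover have "\<bar>- u\<bar> < 1"
    using assms by simp
  from gen_binomial_real[OF this, of "- a"]
  have "(\<lambda>n. ((- a) gchoose n) * (- u) ^ n) sums (1 - u) powr (- a)"
    by simp
  ultimately show ?thesis
    by simp
qed

lemma kcoeff_sums: "\<bar>u\<bar> < 1 \<Longrightarrow> (\<lambda>n. kcoeff n * u ^ n) sums (1 / sqrt (1 - u))"
  using pochhammer_binomial_sums[of u "1/2"]
  by (simp add: kcoeff_def powr_minus_divide powr_half_sqrt)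

lemma ecoeff_sums: "\<bar>u\<bar> < 1 \<Longrightarrow> (\<lambda>n. ecoeff n * u ^ n) sums sqrt (1 - u)"
  using pochhammer_binomial_sums[of u "-1/2"]
  by (simp add: ecoeff_def powr_half_sqrt)

lemma integral_sin_power_reduction:
  "(real m + 2) * integral {0..pi/2} (\<lambda>t. sin t ^ (m + 2))
     = (real m + 1) * integral {0..pi/2} (\<lambda>t. sin t ^ m)"
proof -
  define F where "F t = - (sin t ^ (m + 1) * cos t)" for t :: real
  define f where "f t = (real m + 2) * sin t ^ (m + 2) - (real m + 1) * sin t ^ m" for t :: real
  have "(F has_real_derivative f t) (at t)" for t
  proof -
    have "(F has_real_derivative
        - (real (m + 1) * sin t ^ (m + 1 - 1) * cos t * cos t + sin t ^ (m + 1) * (- sin t))) (at t)"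
      unfolding F_def by (rule derivative_eq_intros refl)+ simp
    moreover have "- (real (m + 1) * sin t ^ (m + 1 - 1) * cos t * cos t + sin t ^ (m + 1) * (- sin t))
        = - (real (m + 1) * sin t ^ m * (cos t * cos t) - sin t ^ (m + 2))"
      by (simp add: algebra_simps)
    moreover have "- (real (m + 1) * sin t ^ m * (cos t * cos t) - sin t ^ (m + 2)) = f t"
    proof -
      have c: "cos t * cos t = 1 - sin t * sin t"
        using sin_cos_squared_add[of t] by (simp add: power2_eq_square)
      have p: "sin t ^ (m + 2) = sin t ^ m * (sin t * sin t)"
        by (simp add: power_add power2_eq_square)
      show ?thesis
        unfolding f_def c p by (simp add: algebra_simps)
    qed
    ultimately show ?thesis
      by (simp only:)
  qed
  then have "(f has_integral F (pi/2) - F 0) {0..pi/2}"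
    by (intro fundamental_theorem_of_calculus)
       (auto simp: has_real_derivative_iff_has_vector_derivative[symmetric] intro: DERIV_subset)
  then have "(f has_integral 0) {0..pi/2}"
    by (simp add: F_def)
  moreover have "(f has_integral (real m + 2) * integral {0..pi/2} (\<lambda>t. sin t ^ (m + 2))
      - (real m + 1) * integral {0..pi/2} (\<lambda>t. sin t ^ m)) {0..pi/2}"
    unfolding f_def
    by (intro has_integral_diff has_integral_mult_right integrable_integral
        integrable_continuous_interval continuous_intros)
  ultimately have "0 = (real m + 2) * integral {0..pi/2} (\<lambda>t. sin t ^ (m + 2))
      - (real m + 1) * integral {0..pi/2} (\<lambda>t. sin t ^ m)"
    by (rule has_integral_unique)
  then show ?thesis
    by simp
qed

lemma integral_sin_power_even: "integral {0..pi/2} (\<lambda>t. sin t ^ (2 * n)) = pi / 2 * kcoeff n"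
proof (induction n)
  case (Suc n)
  have "(2 * real n + 2) * integral {0..pi/2} (\<lambda>t. sin t ^ (2 * Suc n))
      = (2 * real n + 1) * integral {0..pi/2} (\<lambda>t. sin t ^ (2 * n))"
    using integral_sin_power_reduction[of "2 * n"] by simp
  with Suc show ?case
    by (simp add: kcoeff_Suc field_simps)
qed simp

lemma sums_integral_suminf:
  fixes f :: "nat \<Rightarrow> real \<Rightarrow> 'a::banach"
  assumes cont: "\<And>n. continuous_on {a..b} (f n)"
    and bound: "\<And>n t. t \<in> {a..b} \<Longrightarrow> norm (f n t) \<le> M n"
    and "summable M"
  shows "(\<lambda>n. integral {a..b} (f n)) sums integral {a..b} (\<lambda>t. \<Sum>n. f n t)"
proof -
  have "uniform_limit {a..b} (\<lambda>n t. \<Sum>i<n. f i t) (\<lambda>t. \<Sum>n. f n t) sequentially"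
    using bound \<open>summable M\<close> by (rule Weierstrass_m_test)
  moreover have "continuous_on {a..b} (\<lambda>t. \<Sum>i<n. f i t)" for n
    using cont by (intro continuous_intros)
  ultimately obtain I J where
    I: "\<And>n. ((\<lambda>t. \<Sum>i<n. f i t) has_integral I n) {a..b}" and
    J: "((\<lambda>t. \<Sum>n. f n t) has_integral J) {a..b}" and "I \<longlonglongrightarrow> J"
    by (rule uniform_limit_integral) auto
  moreover have "I n = (\<Sum>i<n. integral {a..b} (f i))" for n
  proof -
    have "I n = integral {a..b} (\<lambda>t. \<Sum>i<n. f i t)"
      using I[of n] by (rule integral_unique[symmetric])
    also have "\<dots> = (\<Sum>i<n. integral {a..b} (f i))"
      using cont by (intro integral_sum) (auto intro: integrable_continuous_interval)
    finally show ?thesis .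
  qed
  then have "I = (\<lambda>n. \<Sum>i<n. integral {a..b} (f i))" ..
  moreover have "J = integral {a..b} (\<lambda>t. \<Sum>n. f n t)"
    using J by (rule integral_unique[symmetric])
  ultimately show ?thesis
    using \<open>I \<longlonglongrightarrow> J\<close> by (simp add: sums_def)
qed

lemma integral_sin_sq_powser:
  assumes g: "\<And>n. \<bar>g n\<bar> \<le> 1" and x: "0 \<le> x" "x < 1"
  shows "(\<lambda>n. g n * kcoeff n * x ^ n)
           sums (2 / pi * integral {0..pi/2} (\<lambda>t. \<Sum>n. g n * (x * sin t ^ 2) ^ n))"
proof -
  define f where "f n = (\<lambda>t :: real. g n * x ^ n * sin t ^ (2 * n))" for n
  have f_eq: "g n * (x * sin t ^ 2) ^ n = f n t" for n t
    by (simp add: f_def power_mult_distrib power_mult)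
  have "norm (f n t) \<le> x ^ n" for n t
  proof -
    have "norm (f n t) = \<bar>g n\<bar> * (x ^ n * \<bar>sin t\<bar> ^ (2 * n))"
      using x by (simp add: f_def abs_mult power_abs)
    also have "\<dots> \<le> 1 * (x ^ n * 1)"
      using g[of n] x by (intro mult_mono) (auto intro!: power_le_one)
    finally show ?thesis by simp
  qed
  then have "(\<lambda>n. integral {0..pi/2} (f n)) sums integral {0..pi/2} (\<lambda>t. \<Sum>n. f n t)"
    using x by (intro sums_integral_suminf[where M = "\<lambda>n. x ^ n"] summable_geometric)
      (auto simp: f_def intro!: continuous_intros)
  moreover have "integral {0..pi/2} (f n) = pi / 2 * (g n * kcoeff n * x ^ n)" for n
    using integral_sin_power_even[of n] by (simp add: f_def)
  ultimately have "(\<lambda>n. pi / 2 * (g n * kcoeff n * x ^ n))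
      sums integral {0..pi/2} (\<lambda>t. \<Sum>n. g n * (x * sin t ^ 2) ^ n)"
    by (simp add: f_eq)
  from sums_mult[OF this, of "2 / pi"] show ?thesis
    by (simp add: mult.assoc)
qed

lemma abs_sq_mult_sin_sq_less_1:
  fixes k t :: real
  assumes "\<bar>k\<bar> < 1"
  shows "\<bar>k\<^sup>2 * sin t ^ 2\<bar> < 1"
proof -
  have "k\<^sup>2 * sin t ^ 2 \<le> k\<^sup>2"
    using mult_right_le_one_le[of "k\<^sup>2" "sin t ^ 2"]
    by (simp add: abs_square_le_1 abs_sin_le_one)
  moreover have "k\<^sup>2 < 1"
    using assms by (simp add: abs_square_less_1)
  ultimately show ?thesis
    by simp
qed

lemma ellK_sums:
  assumes "\<bar>k\<bar> < 1"
  shows "(\<lambda>n. kcoeff n ^ 2 * (k\<^sup>2) ^ n) sums (2 / pi * ellK k)"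
proof -
  have "(\<lambda>n. kcoeff n * kcoeff n * (k\<^sup>2) ^ n)
      sums (2 / pi * integral {0..pi/2} (\<lambda>t. \<Sum>n. kcoeff n * (k\<^sup>2 * sin t ^ 2) ^ n))"
    using assms kcoeff_pos kcoeff_le_1
    by (intro integral_sin_sq_powser) (auto simp: abs_square_less_1 less_imp_le)
  moreover have "(\<Sum>n. kcoeff n * (k\<^sup>2 * sin t ^ 2) ^ n) = 1 / sqrt (1 - k\<^sup>2 * sin t ^ 2)" for t
    using kcoeff_sums[OF abs_sq_mult_sin_sq_less_1[OF assms]] by (simp add: sums_iff)
  ultimately show ?thesis
    by (simp add: ellK_def power2_eq_square)
qed

lemma ellE_sums:
  assumes "\<bar>k\<bar> < 1"
  shows "(\<lambda>n. ecoeff n * kcoeff n * (k\<^sup>2) ^ n) sums (2 / pi * ellE k)"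
proof -
  have "(\<lambda>n. ecoeff n * kcoeff n * (k\<^sup>2) ^ n)
      sums (2 / pi * integral {0..pi/2} (\<lambda>t. \<Sum>n. ecoeff n * (k\<^sup>2 * sin t ^ 2) ^ n))"
    using assms abs_ecoeff_le_1 by (intro integral_sin_sq_powser) (auto simp: abs_square_less_1)
  moreover have "(\<Sum>n. ecoeff n * (k\<^sup>2 * sin t ^ 2) ^ n) = sqrt (1 - k\<^sup>2 * sin t ^ 2)" for t
    using ecoeff_sums[OF abs_sq_mult_sin_sq_less_1[OF assms]] by (simp add: sums_iff)
  ultimately show ?thesis
    by (simp add: ellE_def)
qed

definition K_series :: "real \<Rightarrow> real" where
  "K_series x = (\<Sum>n. kcoeff n ^ 2 * x ^ n)"

definition K_series_theta :: "real \<Rightarrow> real" where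
  "K_series_theta x = (\<Sum>n. real n * kcoeff n ^ 2 * x ^ n)"

lemma kcoeff_sq_le_1: "kcoeff n ^ 2 \<le> 1"
  using kcoeff_pos[of n] kcoeff_le_1[of n] by (simp add: power_le_one)

lemma summable_K_series: "\<bar>x\<bar> < 1 \<Longrightarrow> summable (\<lambda>n. kcoeff n ^ 2 * x ^ n)"
  by (rule summable_comparison_test[where g = "\<lambda>n. \<bar>x\<bar> ^ n"])
     (auto intro!: summable_geometric mult_left_le_one_le kcoeff_sq_le_1 simp: abs_mult power_abs)

lemma summable_K_series_theta:
  assumes x: "\<bar>x\<bar> < 1"
  shows "summable (\<lambda>n. real n * kcoeff n ^ 2 * x ^ n)"
proof -
  have "summable (\<lambda>n. diffs (\<lambda>_. 1) n * \<bar>x\<bar> ^ n :: real)"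
    using x by (intro termdiff_converges[of _ 1]) (auto intro: summable_geometric)
  then have summable_Suc: "summable (\<lambda>n. real (Suc n) * \<bar>x\<bar> ^ n)"
    by (simp add: diffs_def)
  have bound: "norm (real n * kcoeff n ^ 2 * x ^ n) \<le> real (Suc n) * \<bar>x\<bar> ^ n" for n
  proof -
    have "real n * kcoeff n ^ 2 * \<bar>x\<bar> ^ n \<le> real (Suc n) * 1 * \<bar>x\<bar> ^ n"
      using kcoeff_sq_le_1[of n] by (intro mult_mono) auto
    then show ?thesis
      by (simp add: abs_mult power_abs)
  qed
  show ?thesis
    by (rule summable_comparison_test'[OF summable_Suc]) (rule bound)
qed

lemma K_series_sums: "\<bar>x\<bar> < 1 \<Longrightarrow> (\<lambda>n. kcoeff n ^ 2 * x ^ n) sums K_series x"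
  unfolding K_series_def by (rule summable_sums[OF summable_K_series])

lemma K_series_theta_sums:
  "\<bar>x\<bar> < 1 \<Longrightarrow> (\<lambda>n. real n * kcoeff n ^ 2 * x ^ n) sums K_series_theta x"
  unfolding K_series_theta_def by (rule summable_sums[OF summable_K_series_theta])

lemma ellK_eq_K_series: "\<bar>k\<bar> < 1 \<Longrightarrow> ellK k = pi / 2 * K_series (k\<^sup>2)"
  using sums_unique2[OF ellK_sums K_series_sums, of k]
  by (simp add: abs_square_less_1 field_simps)

lemma ecoeff_kcoeff_sums:
  assumes x: "\<bar>x\<bar> < 1"
  shows "(\<lambda>n. ecoeff n * kcoeff n * x ^ n) sums ((1 - x) * (K_series x + 2 * K_series_theta x))"
proof -
  define Q where "Q = K_series x + 2 * K_series_theta x"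
  define q where "q n = (2 * real n + 1) * kcoeff n ^ 2 * x ^ n" for n
  have "(\<lambda>n. kcoeff n ^ 2 * x ^ n + 2 * (real n * kcoeff n ^ 2 * x ^ n)) sums Q"
    unfolding Q_def using x by (intro sums_add sums_mult K_series_sums K_series_theta_sums)
  moreover have "(\<lambda>n. kcoeff n ^ 2 * x ^ n + 2 * (real n * kcoeff n ^ 2 * x ^ n)) = q"
    by (simp add: fun_eq_iff q_def algebra_simps)
  ultimately have "q sums Q"
    by simp
  then have "(\<lambda>n. q (Suc n) - x * q n) sums (Q - q 0 - x * Q)"
    by (intro sums_diff sums_mult) (simp_all add: sums_Suc_iff)
  moreover have "ecoeff (Suc n) * kcoeff (Suc n) * x ^ Suc n = q (Suc n) - x * q n" for n
    by (simp add: q_def ecoeff_kcoeff_Suc algebra_simps)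
  ultimately have "(\<lambda>n. ecoeff (Suc n) * kcoeff (Suc n) * x ^ Suc n) sums (Q - 1 - x * Q)"
    by (simp add: q_def)
  from sums_Suc_iff[where f = "\<lambda>n. ecoeff n * kcoeff n * x ^ n", THEN iffD1, OF this]
  show ?thesis
    by (simp add: Q_def algebra_simps)
qed

lemma ellE_eq_K_series:
  "\<bar>k\<bar> < 1 \<Longrightarrow> ellE k = pi / 2 * (1 - k\<^sup>2) * (K_series (k\<^sup>2) + 2 * K_series_theta (k\<^sup>2))"
  using sums_unique2[OF ellE_sums ecoeff_kcoeff_sums, of k]
  by (simp add: abs_square_less_1 field_simps)

lemma B2_div_fact_sq: "B2 n / (fact n)\<^sup>2 = (\<Sum>i\<le>n. kcoeff i ^ 2 * kcoeff (n - i) ^ 2)"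
proof -
  have "(real (n choose i) * pochhammer (1/2) i * pochhammer (1/2) (n - i)) / fact n
      = kcoeff i * kcoeff (n - i)" if "i \<le> n" for i
    using that by (simp add: binomial_fact kcoeff_def field_simps)
  then have "(real (n choose i) * pochhammer (1/2) i * pochhammer (1/2) (n - i))\<^sup>2 / (fact n)\<^sup>2
      = kcoeff i ^ 2 * kcoeff (n - i) ^ 2" if "i \<le> n" for i
    using that by (metis power_divide power_mult_distrib)
  then show ?thesis
    unfolding B2_def sum_divide_distrib atLeast0AtMost by (intro sum.cong) auto
qed

lemma B2_series_sums:
  assumes x: "\<bar>x\<bar> < 1"
  shows "(\<lambda>n. B2 n / (fact n)\<^sup>2 * x ^ n * (a * real n + b))
           sums (2 * a * K_series x * K_series_theta x + b * (K_series x)\<^sup>2)"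
proof -
  define u where "u = (\<lambda>i. kcoeff i ^ 2 * x ^ i)"
  define p where "p = (\<lambda>i. real i * u i)"
  define conv where "conv n = (\<Sum>i\<le>n. u i * u (n - i))" for n
  have u: "u sums K_series x" and p: "p sums K_series_theta x"
    using K_series_sums[OF x] K_series_theta_sums[OF x] by (simp_all add: u_def p_def mult.assoc)
  have nu: "summable (\<lambda>i. norm (u i))" and np: "summable (\<lambda>i. norm (p i))"
    using summable_K_series[of "\<bar>x\<bar>"] summable_K_series_theta[of "\<bar>x\<bar>"] x
    by (simp_all add: u_def p_def abs_mult power_abs mult.assoc)
  have "(\<lambda>n. \<Sum>i\<le>n. u i * u (n - i)) sums (K_series x * K_series x)"
    and "(\<lambda>n. \<Sum>i\<le>n. p i * u (n - i)) sums (K_series_theta x * K_series x)"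
    and "(\<lambda>n. \<Sum>i\<le>n. u i * p (n - i)) sums (K_series x * K_series_theta x)"
    using Cauchy_product_sums[OF nu nu] Cauchy_product_sums[OF np nu]
      Cauchy_product_sums[OF nu np]
    by (simp_all add: sums_unique[OF u] sums_unique[OF p])
  then have cauchy:
    "(\<lambda>n. a * ((\<Sum>i\<le>n. p i * u (n - i)) + (\<Sum>i\<le>n. u i * p (n - i))) + b * conv n)
      sums (a * (K_series_theta x * K_series x + K_series x * K_series_theta x)
            + b * (K_series x * K_series x))"
    unfolding conv_def by (intro sums_add sums_mult)
  have summand_eq: "a * ((\<Sum>i\<le>n. p i * u (n - i)) + (\<Sum>i\<le>n. u i * p (n - i))) + b * conv n
      = B2 n / (fact n)\<^sup>2 * x ^ n * (a * real n + b)" for n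
  proof -
    have "(\<Sum>i\<le>n. p i * u (n - i)) + (\<Sum>i\<le>n. u i * p (n - i)) = real n * conv n"
      unfolding conv_def sum.distrib[symmetric] sum_distrib_left
      by (intro sum.cong) (auto simp: p_def algebra_simps of_nat_diff)
    moreover have "conv n = B2 n / (fact n)\<^sup>2 * x ^ n"
      unfolding conv_def B2_div_fact_sq sum_distrib_right
      by (intro sum.cong) (auto simp: u_def power_add[symmetric])
    ultimately show ?thesis
      by (simp add: algebra_simps add_divide_distrib)
  qed
  have limit_eq: "a * (K_series_theta x * K_series x + K_series x * K_series_theta x)
      + b * (K_series x * K_series x) = 2 * a * K_series x * K_series_theta x + b * (K_series x)\<^sup>2"
    by (simp add: algebra_simps power2_eq_square)
  from cauchy show ?thesis
    unfolding summand_eq limit_eq .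
qed

lemma K_series_ge_1: "0 \<le> x \<Longrightarrow> x < 1 \<Longrightarrow> 1 \<le> K_series x"
  using sum_le_suminf[OF summable_K_series, of x "{0}"] by (simp add: K_series_def)

lemma K_series_strict_mono:
  assumes "0 \<le> x" "x < y" "y < 1"
  shows "K_series x < K_series y"
proof -
  have "0 < (\<Sum>n. kcoeff n ^ 2 * y ^ n - kcoeff n ^ 2 * x ^ n)"
    using assms kcoeff_pos[of 1]
    by (intro suminf_pos2[where i = 1] summable_diff summable_K_series)
       (auto intro!: mult_left_mono power_mono)
  also have "\<dots> = K_series y - K_series x"
    using assms unfolding K_series_def by (subst suminf_diff) (auto intro!: summable_K_series)
  finally show ?thesis
    by simp
qed

lemma K_series_mono: "0 \<le> x \<Longrightarrow> x \<le> y \<Longrightarrow> y < 1 \<Longrightarrow> K_series x \<le> K_series y"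
  using K_series_strict_mono[of x y] by (cases "x = y") auto

lemma isCont_K_series:
  assumes "\<bar>x\<bar> < 1"
  shows "isCont K_series x"
proof -
  have "summable (\<lambda>n. kcoeff n ^ 2 * ((1 + \<bar>x\<bar>) / 2) ^ n)"
    using assms by (intro summable_K_series) auto
  then have "isCont (\<lambda>x. \<Sum>n. kcoeff n ^ 2 * x ^ n) x"
    by (rule isCont_powser) (use assms in auto)
  then show ?thesis
    by (simp add: K_series_def [abs_def])
qed

lemma kcoeff_sq_lower_bound: "0 < n \<Longrightarrow> 1 \<le> 4 * real n * kcoeff n ^ 2"
proof (induction n rule: nat_induct_non_zero)
  case 1
  have "kcoeff (Suc 0) = 1 / 2"
    using kcoeff_Suc[of 0] by simp
  then show ?case
    by (simp only: One_nat_def) (simp add: power2_eq_square)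
next
  case (Suc n)
  define d where "d = real n + 1"
  define c where "c = kcoeff n"
  have "d > 0"
    by (simp add: d_def)
  have "4 * real n * kcoeff n ^ 2 = 4 * (d - 1) * c ^ 2"
    by (simp add: d_def c_def)
  also have "\<dots> \<le> (2 * d - 1) ^ 2 / d * c ^ 2"
    using \<open>d > 0\<close> by (intro mult_right_mono) (auto simp: field_simps power2_eq_square)
  also have "\<dots> = 4 * d * (c * (2 * d - 1) / (2 * d)) ^ 2"
    using \<open>d > 0\<close> by (simp add: field_simps power2_eq_square)
  also have "\<dots> = 4 * real (Suc n) * kcoeff (Suc n) ^ 2"
    by (simp add: kcoeff_Suc d_def c_def algebra_simps)
  finally show ?case
    using Suc.IH by simp
qed

lemma not_summable_kcoeff_sq: "\<not> summable (\<lambda>n. kcoeff n ^ 2)"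
proof
  assume "summable (\<lambda>n. kcoeff n ^ 2)"
  then have "summable (\<lambda>n. 4 * kcoeff n ^ 2)"
    by (rule summable_mult)
  moreover have "norm (inverse (real n)) \<le> 4 * kcoeff n ^ 2" if "n \<ge> 1" for n
    using kcoeff_sq_lower_bound[of n] that by (simp add: field_simps)
  ultimately have "summable (\<lambda>n. inverse (real n))"
    by (rule summable_comparison_test')
  then show False
    using not_summable_harmonic by blast
qed

lemma K_series_tendsto_at_top: "filterlim K_series at_top (at_left 1)"
  unfolding filterlim_at_top
proof
  fix M :: real
  obtain N where N: "M < (\<Sum>n<N. kcoeff n ^ 2)"
  proof (rule ccontr)
    assume "\<not> thesis"
    with that have "(\<Sum>n<N. kcoeff n ^ 2) \<le> M" for N
      by (meson not_less)
    then have "summable (\<lambda>n. kcoeff n ^ 2)"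
      by (intro summableI_nonneg_bounded) auto
    with not_summable_kcoeff_sq show False ..
  qed
  define P where "P = (\<lambda>x :: real. \<Sum>n<N. kcoeff n ^ 2 * x ^ n)"
  have "(P \<longlongrightarrow> (\<Sum>n<N. kcoeff n ^ 2)) (at_left 1)"
    unfolding P_def by (intro tendsto_eq_intros) auto
  from order_tendstoD(1)[OF this N] have "eventually (\<lambda>x. M < P x) (at_left 1)" .
  moreover have "eventually (\<lambda>x. x \<in> {0<..<1}) (at_left (1 :: real))"
    by (rule eventually_at_left_real) simp
  ultimately show "eventually (\<lambda>x. M \<le> K_series x) (at_left 1)"
  proof eventually_elim
    case (elim x)
    have "P x \<le> K_series x"
      unfolding P_def K_series_def using elim
      by (intro sum_le_suminf summable_K_series) auto
    with elim show ?case
      by simp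
  qed
qed

lemma ellK_complementary_ratio:
  assumes "0 < w" "w < 1"
  shows "ellK (sqrt (1 - w\<^sup>2)) / ellK w = K_series (1 - w\<^sup>2) / K_series (w\<^sup>2)"
proof -
  have w2: "0 < w\<^sup>2" "w\<^sup>2 < 1"
    using assms by (auto simp: power_less_one_iff)
  then have "\<bar>sqrt (1 - w\<^sup>2)\<bar> < 1" "\<bar>w\<bar> < 1"
    using assms by auto
  then show ?thesis
    using w2 by (simp add: ellK_eq_K_series)
qed

lemma K_series_ratio_strict_antimono:
  assumes "0 < x" "x < y" "y < 1"
  shows "K_series (1 - y) / K_series y < K_series (1 - x) / K_series x"
proof -
  have "K_series (1 - y) < K_series (1 - x)" "K_series x < K_series y"
    using assms by (auto intro!: K_series_strict_mono)
  moreover have "1 \<le> K_series (1 - y)" "1 \<le> K_series x"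
    using assms by (auto intro!: K_series_ge_1)
  ultimately show ?thesis
    by (simp add: frac_less2)
qed

lemma continuous_on_K_series_ratio:
  assumes "0 < a" "b < 1"
  shows "continuous_on {a..b} (\<lambda>x. K_series (1 - x) / K_series x)"
proof (intro continuous_at_imp_continuous_on ballI)
  fix x assume x: "x \<in> {a..b}"
  then have "isCont (\<lambda>x. K_series (1 - x)) x" "isCont K_series x"
    using assms by (auto intro!: isCont_o2[where g = K_series] isCont_K_series)
  moreover have "K_series x \<noteq> 0"
    using K_series_ge_1[of x] assms x by auto
  ultimately show "isCont (\<lambda>x. K_series (1 - x) / K_series x) x"
    by (rule isCont_divide)
qed

lemma K_series_ratio_surj:
  assumes "s > 0"
  obtains x where "0 < x" "x < 1" "K_series (1 - x) / K_series x = s"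
proof -
  define f where "f x = K_series (1 - x) / K_series x" for x
  define m where "m = K_series (1/2)"
  have "1 \<le> m"
    unfolding m_def by (rule K_series_ge_1) auto
  have "eventually (\<lambda>x. max (s * m) (m / s) < K_series x) (at_left 1)"
    using K_series_tendsto_at_top unfolding filterlim_at_top_dense by blast
  moreover have "eventually (\<lambda>x. x \<in> {1/2<..<1}) (at_left (1 :: real))"
    by (rule eventually_at_left_real) simp
  ultimately have
    "eventually (\<lambda>x. max (s * m) (m / s) < K_series x \<and> x \<in> {1/2<..<1}) (at_left 1)"
    by (rule eventually_conj)
  from eventually_happens'[OF trivial_limit_at_left_real this]
  obtain x where x: "1/2 < x" "x < 1" and big: "s * m < K_series x" "m / s < K_series x"
    by auto
  have small: "1 \<le> K_series (1 - x)" "K_series (1 - x) \<le> m" "1 \<le> K_series x"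
    using x unfolding m_def by (auto intro!: K_series_ge_1 K_series_mono)
  have "f x \<le> s"
    using small big \<open>s > 0\<close> by (simp add: f_def divide_le_eq field_simps)
  moreover have "s * K_series (1 - x) < K_series x"
    using mult_left_mono[OF small(2), of s] big(1) \<open>s > 0\<close> by linarith
  then have "s \<le> f (1 - x)"
    using small by (simp add: f_def le_divide_eq)
  moreover have "continuous_on {1 - x..x} f"
    unfolding f_def[abs_def] using x by (intro continuous_on_K_series_ratio) auto
  ultimately obtain y where "1 - x \<le> y" "y \<le> x" "f y = s"
    using IVT2'[of f x s "1 - x"] x by auto
  with x show ?thesis
    by (intro that[of y]) (auto simp: f_def)
qed

lemma singular_modulus_in_unit_interval:
  assumes "r > 0"
  shows "0 < singular_modulus r \<and> singular_modulus r < 1"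
proof -
  define P where "P w \<longleftrightarrow> 0 < w \<and> w < 1 \<and> ellK (sqrt (1 - w\<^sup>2)) / ellK w = sqrt r" for w
  have P_iff: "P w \<longleftrightarrow> 0 < w \<and> w < 1 \<and> K_series (1 - w\<^sup>2) / K_series (w\<^sup>2) = sqrt r" for w
    unfolding P_def using ellK_complementary_ratio[of w] by auto
  have "\<exists>!w. P w"
  proof (rule ex_ex1I)
    obtain x where "0 < x" "x < 1" "K_series (1 - x) / K_series x = sqrt r"
      using K_series_ratio_surj[of "sqrt r"] assms by auto
    then show "\<exists>w. P w"
      by (intro exI[of _ "sqrt x"]) (simp add: P_iff)
  next
    fix v w assume "P v" "P w"
    then have "\<not> v\<^sup>2 < w\<^sup>2" "\<not> w\<^sup>2 < v\<^sup>2"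
      using K_series_ratio_strict_antimono[of "v\<^sup>2" "w\<^sup>2"]
        K_series_ratio_strict_antimono[of "w\<^sup>2" "v\<^sup>2"]
      by (auto simp: P_iff power_less_one_iff)
    with \<open>P v\<close> \<open>P w\<close> show "v = w"
      by (auto simp: P_def)
  qed
  then have "P (singular_modulus r)"
    unfolding singular_modulus_def P_def[abs_def] by (rule theI')
  then show ?thesis
    by (simp add: P_def)
qed

theorem theorem2p2:
  fixes r :: real
  assumes "r > 0"
  shows "(\<lambda>n. B2 n / (fact n)^2 * (singular_modulus r)^(2*n) *
            (sqrt r * (1 - (singular_modulus r)^2) * real n + elliptic_alpha r
             - sqrt r * (singular_modulus r)^2))
         sums (1 / pi)"
proof -
  define k where "k = singular_modulus r"
  define A where "A = K_series (k\<^sup>2)"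
  define T where "T = K_series_theta (k\<^sup>2)"
  have k: "\<bar>k\<bar> < 1" "\<bar>k\<^sup>2\<bar> < 1"
    using singular_modulus_in_unit_interval[OF assms] by (auto simp: k_def power_less_one_iff)
  have "A \<ge> 1"
    unfolding A_def using k by (intro K_series_ge_1) auto
  have alpha: "elliptic_alpha r = 1 / (pi * A\<^sup>2) - sqrt r * ((1 - k\<^sup>2) * (A + 2 * T) / A - 1)"
    unfolding elliptic_alpha_def Let_def k_def[symmetric] ellK_eq_K_series[OF k(1)]
      ellE_eq_K_series[OF k(1)] A_def[symmetric] T_def[symmetric]
    using \<open>A \<ge> 1\<close> by (simp add: field_simps power2_eq_square)
  have "(\<lambda>n. B2 n / (fact n)\<^sup>2 * (k\<^sup>2) ^ n
        * (sqrt r * (1 - k\<^sup>2) * real n + (elliptic_alpha r - sqrt r * k\<^sup>2)))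
      sums (2 * (sqrt r * (1 - k\<^sup>2)) * A * T + (elliptic_alpha r - sqrt r * k\<^sup>2) * A\<^sup>2)"
    unfolding A_def T_def using k(2) by (rule B2_series_sums)
  also have "2 * (sqrt r * (1 - k\<^sup>2)) * A * T + (elliptic_alpha r - sqrt r * k\<^sup>2) * A\<^sup>2 = 1 / pi"
    using \<open>A \<ge> 1\<close> unfolding alpha by (simp add: field_simps power2_eq_square)
  finally show ?thesis
    unfolding k_def[symmetric] power_mult add_diff_eq .
qed

end
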